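(* For any values of $k$ and $\mu$, \[ \,_{2}F_{3}\left(\tfrac{\mu}{2}+\tfrac{1}{4},\tfrac{\mu}{2}+\tfrac{3}{4};1,\mu+\tfrac{1}{2},\mu+1;-k^{2}\right)=\sqrt{\pi}\,\Gamma(\mu+1)\sum_{L=0}^{\infty}\frac{(-1)^{2L}2^{-6L}k^{2L}\Gamma(2L+1)\left(2-\delta_{L0}\right)}{(L!)^{2}\Gamma\left(L+\frac{1}{2}\right)\Gamma(L+\mu+1)} J_{2L}(k)\,_{1}F_{2}\left(L+\tfrac{1}{2};2L+1,L+\mu+1;-\tfrac{k^{2}}{4}\right). \]
   Context: $\,_{p}F_{q}(a_1,\dots,a_p;b_1,\dots,b_q;z)=\sum_{n\ge0}\frac{(a_1)_n\cdots(a_p)_n}{(b_1)_n\cdots(b_q)_n}\frac{z^n}{n!}$ is the generalized hypergeometric function, with $(c)_n=\Gamma(c+n)/\Gamma(c)$. $J_n$ is the Bessel function of the first kind. $\delta_{L0}$ is the Kronecker delta. *)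

theory Defs
  imports "HOL-Analysis.Analysis"
begin

definition hyperF :: "complex list \<Rightarrow> complex list \<Rightarrow> complex \<Rightarrow> complex" where
  "hyperF as bs z =
     (\<Sum>n. (prod_list (map (\<lambda>a. pochhammer a n) as) / prod_list (map (\<lambda>b. pochhammer b n) bs))
            * z ^ n / fact n)"

definition besselJ :: "nat \<Rightarrow> complex \<Rightarrow> complex" where
  "besselJ n z = (\<Sum>m. (-1) ^ m / (fact m * fact (m + n)) * (z / 2) ^ (2 * m + n))"

end

theory Submission
  imports Defs "HOL-Computational_Algebra.Formal_Power_Series"
begin

text \<open>
  Expand \<open>besselJ (2 * L) k\<close> and the \<open>\<^sub>1F\<^sub>2\<close> factor of the \<open>L\<close>-th summand as power series
  in \<open>k\<close>. Once the Gamma coefficient is absorbed, the summand is \<open>neumann_factor L\<close> times a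
  Cauchy product whose \<open>n\<close>-th term is a multiple of \<open>k ^ (2 * (2 * L + n))\<close> and is bounded by a
  product of two exponential series in \<open>L\<close> and \<open>n\<close>. The double series is therefore absolutely
  summable and may be summed along the diagonals \<open>2 * L + n = N\<close> instead of the rows.
  Regrouping the \<open>N\<close>-th diagonal by \<open>p = L + i\<close>, the sum over \<open>L\<close> is a Vandermonde
  convolution of central binomial coefficients, the remaining sum over \<open>p\<close> is the Chu-Vandermonde
  sum \<open>\<Sum>q\<le>N. (2N choose 2q) (1/2)\<^sub>q / (\<mu>+1)\<^sub>q = (\<mu>+N+1/2)\<^sub>N / (\<mu>+1)\<^sub>N\<close>, and Legendre's
  duplication \<open>(\<mu>+1/2)\<^sub>2\<^sub>N = 4\<^sup>N (\<mu>/2+1/4)\<^sub>N (\<mu>/2+3/4)\<^sub>N\<close> identifies the result with the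
  \<open>N\<close>-th term of the \<open>\<^sub>2F\<^sub>3\<close> series.
\<close>

definition neumann_factor :: "nat \<Rightarrow> 'a::numeral" where
  "neumann_factor L = (if L = 0 then 1 else 2)"

lemma of_nat_neumann_factor:
  "of_nat (neumann_factor L) = (neumann_factor L :: 'a::semiring_1)"
  by (simp add: neumann_factor_def)

lemma choose_double_centre_symmetric:
  assumes "L \<le> n"
  shows "(2 * n) choose (n + L) = (2 * n) choose (n - L)"
  using binomial_symmetric[of "n + L" "2 * n"] assms by simp

lemma vandermonde_terms_upto_centre:
  fixes p q :: nat
  shows "(\<Sum>i\<le>p. ((2 * p) choose i) * ((2 * q) choose (p + q - i))) =
         (\<Sum>L\<le>min p q. ((2 * p) choose (p - L)) * ((2 * q) choose (q - L)))"
proof -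
  have "(\<Sum>i\<le>p. ((2 * p) choose i) * ((2 * q) choose (p + q - i))) =
        (\<Sum>L\<le>p. ((2 * p) choose (p - L)) * ((2 * q) choose (q + L)))"
    by (rule sum.reindex_bij_witness[of _ "\<lambda>L. p - L" "\<lambda>i. p - i"]) (auto simp: add.commute)
  also have "\<dots> = (\<Sum>L\<le>min p q. ((2 * p) choose (p - L)) * ((2 * q) choose (q + L)))"
    by (rule sum.mono_neutral_right) auto
  also have "\<dots> = (\<Sum>L\<le>min p q. ((2 * p) choose (p - L)) * ((2 * q) choose (q - L)))"
    by (intro sum.cong refl) (simp add: choose_double_centre_symmetric)
  finally show ?thesis .
qed

lemma vandermonde_terms_beyond_centre:
  fixes p q :: nat
  shows "(\<Sum>i\<in>{p<..p + q}. ((2 * p) choose i) * ((2 * q) choose (p + q - i))) =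
         (\<Sum>L\<in>{1..min p q}. ((2 * p) choose (p - L)) * ((2 * q) choose (q - L)))"
proof -
  have "(\<Sum>i\<in>{p<..p + q}. ((2 * p) choose i) * ((2 * q) choose (p + q - i))) =
        (\<Sum>L\<in>{1..q}. ((2 * p) choose (p + L)) * ((2 * q) choose (q - L)))"
    by (rule sum.reindex_bij_witness[of _ "\<lambda>L. p + L" "\<lambda>i. i - p"]) (auto simp: add.commute)
  also have "\<dots> = (\<Sum>L\<in>{1..min p q}. ((2 * p) choose (p + L)) * ((2 * q) choose (q - L)))"
    by (rule sum.mono_neutral_right) auto
  also have "\<dots> = (\<Sum>L\<in>{1..min p q}. ((2 * p) choose (p - L)) * ((2 * q) choose (q - L)))"
    by (intro sum.cong refl) (simp add: choose_double_centre_symmetric)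
  finally show ?thesis .
qed

lemma sum_neumann_factor_central_binomials:
  fixes p q :: nat
  shows "(\<Sum>L\<le>min p q. neumann_factor L * ((2 * p) choose (p - L)) * ((2 * q) choose (q - L)))
         = (2 * (p + q)) choose (p + q)"
proof -
  define f where "f L = ((2 * p) choose (p - L)) * ((2 * q) choose (q - L))" for L
  have centre: "{..min p q} = insert 0 {1..min p q}" by auto
  have "(2 * (p + q)) choose (p + q) = (\<Sum>i\<le>p + q. ((2 * p) choose i) * ((2 * q) choose (p + q - i)))"
    using vandermonde[of "2 * p" "2 * q" "p + q"] by simp
  also have "{..p + q} = {..p} \<union> {p<..p + q}" by auto
  also have "(\<Sum>i\<in>{..p} \<union> {p<..p + q}. ((2 * p) choose i) * ((2 * q) choose (p + q - i))) =
      (\<Sum>L\<le>min p q. f L) + (\<Sum>L\<in>{1..min p q}. f L)"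
    by (subst sum.union_disjoint)
       (auto simp: vandermonde_terms_upto_centre vandermonde_terms_beyond_centre f_def)
  also have "\<dots> = f 0 + 2 * (\<Sum>L\<in>{1..min p q}. f L)"
    unfolding centre by simp
  also have "\<dots> = (\<Sum>L\<le>min p q. neumann_factor L * f L)"
    unfolding centre by (simp add: sum_distrib_left neumann_factor_def)
  finally show ?thesis by (simp add: f_def mult.assoc)
qed

lemma sum_neumann_factor_inverse_factorials:
  fixes p q :: nat
  shows "(\<Sum>L\<le>min p q. neumann_factor L / (fact (p - L) * fact (p + L) * fact (q - L) * fact (q + L)))
         = (fact (2 * (p + q)) / (fact (2 * p) * fact (2 * q) * fact (p + q) ^ 2) :: 'a::field_char_0)"
proof -
  have choose_centre: "(of_nat ((2 * n) choose (n - L)) :: 'a) = fact (2 * n) / (fact (n - L) * fact (n + L))"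
    if "L \<le> n" for n L
    using binomial_fact[of "n - L" "2 * n", where 'a = 'a] that by (simp add: mult_2)
  have "(of_nat ((2 * (p + q)) choose (p + q)) :: 'a) =
        (\<Sum>L\<le>min p q. neumann_factor L * of_nat ((2 * p) choose (p - L))
                          * of_nat ((2 * q) choose (q - L)))"
    unfolding sum_neumann_factor_central_binomials[symmetric] by (simp add: of_nat_neumann_factor)
  also have "\<dots> = fact (2 * p) * fact (2 * q) *
      (\<Sum>L\<le>min p q. neumann_factor L / (fact (p - L) * fact (p + L) * fact (q - L) * fact (q + L)))"
    unfolding sum_distrib_left by (intro sum.cong refl) (simp add: choose_centre, simp add: mult_ac)
  finally show ?thesis
    using choose_centre[of 0 "p + q"] by (simp add: field_simps power2_eq_square)
qed

lemma one_half_notin_nonpos_Ints: "(1/2 :: 'a::field_char_0) \<notin> \<int>\<^sub>\<le>\<^sub>0"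
proof
  assume "(1/2 :: 'a) \<in> \<int>\<^sub>\<le>\<^sub>0"
  then obtain j where "(1/2 :: 'a) = - of_nat j"
    by (auto elim!: nonpos_Ints_cases')
  then have "(of_nat (2 * j + 1) :: 'a) = 0"
    by (simp add: field_simps neg_eq_iff_add_eq_0)
  then show False
    by (simp only: of_nat_eq_0_iff)
qed

lemma pochhammer_half_nonzero: "pochhammer (1/2 :: 'a::field_char_0) n \<noteq> 0"
proof
  assume "pochhammer (1/2 :: 'a) n = 0"
  then obtain j where "(1/2 :: 'a) = - of_nat j"
    by (auto simp: pochhammer_eq_0_iff)
  with one_half_notin_nonpos_Ints[where 'a = 'a] show False
    by simp
qed

lemma sum_choose_pochhammer_shifted:
  fixes a x :: "'a::field_char_0"
  shows "(\<Sum>q\<le>N. of_nat (N choose q) * pochhammer (a + of_nat N - of_nat q) q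
                   * pochhammer (x + of_nat q) (N - q))
       = pochhammer (x + a + of_nat N - 1) N"
proof -
  define b where "b = x + of_nat N - 1"
  have "pochhammer (x + a + of_nat N - 1) N = fact N * ((a + of_nat N - 1 + b) gchoose N)"
    by (simp add: gbinomial_pochhammer' b_def algebra_simps)
  also have "\<dots> = (\<Sum>q\<le>N. fact N * (((a + of_nat N - 1) gchoose q) * (b gchoose (N - q))))"
    by (simp add: gbinomial_Vandermonde[symmetric] sum_distrib_left atLeast0AtMost)
  also have "\<dots> = (\<Sum>q\<le>N. of_nat (N choose q) * pochhammer (a + of_nat N - of_nat q) q
                              * pochhammer (x + of_nat q) (N - q))"
  proof (intro sum.cong refl)
    fix q assume "q \<in> {..N}"
    then have "q \<le> N" by simp
    then show "fact N * (((a + of_nat N - 1) gchoose q) * (b gchoose (N - q))) =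
        of_nat (N choose q) * pochhammer (a + of_nat N - of_nat q) q * pochhammer (x + of_nat q) (N - q)"
      by (simp add: gbinomial_pochhammer' b_def binomial_fact algebra_simps)
  qed
  finally show ?thesis ..
qed

lemma choose_double_even_mult_pochhammer_half:
  assumes "q \<le> N"
  shows "(of_nat ((2 * N) choose (2 * q)) :: 'a::field_char_0) * pochhammer (1/2) q
       = of_nat (N choose q) * pochhammer (1/2 + of_nat N - of_nat q) q"
proof -
  have choose_even: "(of_nat ((2 * N) choose (2 * q)) :: 'a) = fact (2 * N) / (fact (2 * q) * fact (2 * (N - q)))"
    using binomial_fact[of "2 * q" "2 * N"] assms by (simp add: diff_mult_distrib2)
  have split: "pochhammer (1/2 :: 'a) N = pochhammer (1/2) (N - q) * pochhammer (1/2 + of_nat N - of_nat q) q"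
    using pochhammer_product[of "N - q" N "1/2 :: 'a"] assms by (simp add: add_diff_eq)
  have "(2::'a) ^ (2 * N) = 2 ^ (2 * q) * 2 ^ (2 * (N - q))"
    using assms by (simp flip: power_add add_mult_distrib2)
  then show ?thesis
    unfolding choose_even binomial_fact[OF assms] fact_double split
    using pochhammer_half_nonzero[of q, where 'a = 'a] pochhammer_half_nonzero[of "N - q", where 'a = 'a]
    by (simp add: field_simps)
qed

lemma sum_choose_double_even_pochhammer_half:
  fixes x :: "'a::field_char_0"
  assumes "pochhammer x N \<noteq> 0"
  shows "(\<Sum>q\<le>N. of_nat ((2 * N) choose (2 * q)) * pochhammer (1/2) q / pochhammer x q)
       = pochhammer (x + of_nat N - 1/2) N / pochhammer x N"
proof -
  have "(\<Sum>q\<le>N. of_nat ((2 * N) choose (2 * q)) * pochhammer (1/2) q / pochhammer x q) * pochhammer x N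
      = (\<Sum>q\<le>N. of_nat (N choose q) * pochhammer (1/2 + of_nat N - of_nat q) q
                   * pochhammer (x + of_nat q) (N - q))"
    unfolding sum_distrib_right
  proof (intro sum.cong refl)
    fix q assume "q \<in> {..N}"
    then have "q \<le> N" by simp
    then have split: "pochhammer x N = pochhammer x q * pochhammer (x + of_nat q) (N - q)"
      by (rule pochhammer_product)
    with assms have "pochhammer x q \<noteq> 0" by auto
    with split \<open>q \<le> N\<close>
    show "of_nat ((2 * N) choose (2 * q)) * pochhammer (1/2) q / pochhammer x q * pochhammer x N =
          of_nat (N choose q) * pochhammer (1/2 + of_nat N - of_nat q) q * pochhammer (x + of_nat q) (N - q)"
      by (simp add: choose_double_even_mult_pochhammer_half[symmetric])
  qed
  also have "\<dots> = pochhammer (x + of_nat N - 1/2) N"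
    using sum_choose_pochhammer_shifted[of N "1/2" x] by (simp add: algebra_simps)
  finally show ?thesis using assms by (simp add: field_simps)
qed

definition hyperF_term :: "complex list \<Rightarrow> complex list \<Rightarrow> complex \<Rightarrow> nat \<Rightarrow> complex" where
  "hyperF_term as bs z n =
     prod_list (map (\<lambda>a. pochhammer a n) as) / prod_list (map (\<lambda>b. pochhammer b n) bs) * z ^ n / fact n"

lemma hyperF_eq_suminf: "hyperF as bs z = (\<Sum>n. hyperF_term as bs z n)"
  unfolding hyperF_def hyperF_term_def ..

definition besselJ_term :: "nat \<Rightarrow> complex \<Rightarrow> nat \<Rightarrow> complex" where
  "besselJ_term n z m = (-1) ^ m / (fact m * fact (m + n)) * (z / 2) ^ (2 * m + n)"

lemma besselJ_eq_suminf: "besselJ n z = (\<Sum>m. besselJ_term n z m)"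
  unfolding besselJ_def besselJ_term_def ..

definition pochhammer_ratio :: "complex \<Rightarrow> nat \<Rightarrow> complex" where
  "pochhammer_ratio \<mu> q = pochhammer (1/2) q / pochhammer (\<mu> + 1) q"

definition scaled_F12_term :: "complex \<Rightarrow> complex \<Rightarrow> nat \<Rightarrow> nat \<Rightarrow> complex" where
  "scaled_F12_term \<mu> k L m =
     (-1) ^ m * (k / 2) ^ (2 * m + 2 * L) * pochhammer_ratio \<mu> (L + m) / (fact m * fact (m + 2 * L))"

definition product_term :: "complex \<Rightarrow> complex \<Rightarrow> nat \<times> nat \<Rightarrow> complex" where
  "product_term \<mu> k = (\<lambda>(L, n). neumann_factor L *
     (\<Sum>i\<le>n. besselJ_term (2 * L) k i * scaled_F12_term \<mu> k L (n - i)))"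

lemma besselJ_term_mult_scaled_F12_term:
  assumes "L \<le> p" and "p + L \<le> N"
  shows "besselJ_term (2 * L) k (p - L) * scaled_F12_term \<mu> k L (N - p - L)
       = (-1) ^ N * (k / 2) ^ (2 * N) * pochhammer_ratio \<mu> (N - p)
         / (fact (p - L) * fact (p + L) * fact (N - p - L) * fact (N - p + L))"
proof -
  obtain i m where p: "p = L + i" and N: "N = p + L + m"
    using assms le_Suc_ex by blast
  have indices: "p - L = i" "p + L = i + 2 * L" "N - p - L = m" "N - p + L = m + 2 * L" "N - p = L + m"
    by (simp_all add: N p)
  have sign: "(-1 :: complex) ^ N = (-1) ^ i * (-1) ^ m"
    by (simp add: N p power_add power_mult)
  have power: "(k / 2) ^ (2 * N) = (k / 2) ^ (2 * i + 2 * L) * (k / 2) ^ (2 * m + 2 * L)"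
    by (simp add: N p flip: power_add) (simp add: algebra_simps)
  show ?thesis
    unfolding besselJ_term_def scaled_F12_term_def indices sign power
    by (simp add: field_simps mult_2 mult_2_right)
qed

lemma sum_diagonal_product_term_regrouped:
  "(\<Sum>L\<le>N div 2. product_term \<mu> k (L, N - 2 * L)) =
     (-1) ^ N * (k / 2) ^ (2 * N) * (\<Sum>p\<le>N. pochhammer_ratio \<mu> (N - p) *
       (\<Sum>L\<le>min p (N - p). neumann_factor L
          / (fact (p - L) * fact (p + L) * fact (N - p - L) * fact (N - p + L))))"
proof -
  define g where "g = (\<lambda>(L, i). neumann_factor L * (besselJ_term (2 * L) k i
                                 * scaled_F12_term \<mu> k L (N - 2 * L - i)))"
  have "(\<Sum>L\<le>N div 2. product_term \<mu> k (L, N - 2 * L))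
      = (\<Sum>(L, i)\<in>Sigma {..N div 2} (\<lambda>L. {..N - 2 * L}). g (L, i))"
    by (simp add: sum.Sigma[symmetric] product_term_def g_def sum_distrib_left)
  also have "\<dots> = (\<Sum>(p, L)\<in>Sigma {..N} (\<lambda>p. {..min p (N - p)}). g (L, p - L))"
    by (rule sum.reindex_bij_witness[of _ "\<lambda>(p, L). (L, p - L)" "\<lambda>(L, i). (L + i, L)"]) auto
  also have "\<dots> = (\<Sum>p\<le>N. \<Sum>L\<le>min p (N - p). g (L, p - L))"
    by (simp add: sum.Sigma)
  also have "\<dots> = (-1) ^ N * (k / 2) ^ (2 * N) * (\<Sum>p\<le>N. pochhammer_ratio \<mu> (N - p) *
       (\<Sum>L\<le>min p (N - p). neumann_factor L
          / (fact (p - L) * fact (p + L) * fact (N - p - L) * fact (N - p + L))))"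
    unfolding sum_distrib_left
  proof (intro sum.cong refl)
    fix p L assume "p \<in> {..N}" and "L \<in> {..min p (N - p)}"
    then have "L \<le> p" "p + L \<le> N" "N - 2 * L - (p - L) = N - p - L" by auto
    then show "g (L, p - L) = (-1) ^ N * (k / 2) ^ (2 * N) * (pochhammer_ratio \<mu> (N - p) *
        (neumann_factor L / (fact (p - L) * fact (p + L) * fact (N - p - L) * fact (N - p + L))))"
      using besselJ_term_mult_scaled_F12_term[of L p N k \<mu>] by (simp add: g_def)
  qed
  finally show ?thesis .
qed

text \<open>No hypothesis on \<open>\<mu> + 1\<close> is needed: if \<open>(\<mu>+1)\<^sub>N = 0\<close>, both sides are \<open>0\<close> by \<open>x / 0 = 0\<close>.\<close>

lemma hyperF_term_2F3:
  assumes "\<mu> + 1/2 \<notin> \<int>\<^sub>\<le>\<^sub>0"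
  shows "hyperF_term [\<mu>/2 + 1/4, \<mu>/2 + 3/4] [1, \<mu> + 1/2, \<mu> + 1] (- (k ^ 2)) N
       = (-1) ^ N * (k / 2) ^ (2 * N) / fact N ^ 2
         * (pochhammer (\<mu> + 1 + of_nat N - 1/2) N / pochhammer (\<mu> + 1) N)"
proof -
  have args: "2 * (\<mu>/2 + 1/4) = \<mu> + 1/2" "\<mu>/2 + 1/4 + 1/2 = \<mu>/2 + 3/4"
    "\<mu> + 1/2 + of_nat N = \<mu> + 1 + of_nat N - 1/2"
    by simp_all
  have "of_nat (2 ^ (2 * N)) = (4 :: complex) ^ N"
    by (simp add: power_mult)
  then have "4 ^ N * (pochhammer (\<mu>/2 + 1/4) N * pochhammer (\<mu>/2 + 3/4) N)
      = pochhammer (\<mu> + 1/2) (N + N)"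
    using pochhammer_double[of "\<mu>/2 + 1/4" N, unfolded args] by (simp add: mult.assoc mult_2)
  also have "\<dots> = pochhammer (\<mu> + 1/2) N * pochhammer (\<mu> + 1 + of_nat N - 1/2) N"
    using pochhammer_product'[of "\<mu> + 1/2" N N] unfolding args .
  finally have duplication:
    "4 ^ N * (pochhammer (\<mu>/2 + 1/4) N * pochhammer (\<mu>/2 + 3/4) N) / pochhammer (\<mu> + 1/2) N
      = pochhammer (\<mu> + 1 + of_nat N - 1/2) N"
    using assms pochhammer_eq_0_imp_nonpos_Int by (metis nonzero_mult_div_cancel_left)
  have "(k ^ 2) ^ N = 4 ^ N * (k / 2) ^ (2 * N)"
    by (simp add: power_divide power_mult)
  then have "(- (k ^ 2)) ^ N = 4 ^ N * ((-1) ^ N * (k / 2) ^ (2 * N))"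
    by (simp add: power_minus[of "k ^ 2"])
  then have "hyperF_term [\<mu>/2 + 1/4, \<mu>/2 + 3/4] [1, \<mu> + 1/2, \<mu> + 1] (- (k ^ 2)) N
      = 4 ^ N * (pochhammer (\<mu>/2 + 1/4) N * pochhammer (\<mu>/2 + 3/4) N) / pochhammer (\<mu> + 1/2) N
        * ((-1) ^ N * (k / 2) ^ (2 * N) / fact N ^ 2 / pochhammer (\<mu> + 1) N)"
    by (simp add: hyperF_term_def pochhammer_fact[symmetric] power2_eq_square mult_ac)
  then show ?thesis
    unfolding duplication by simp
qed

lemma sum_diagonal_product_term:
  assumes "\<mu> + 1/2 \<notin> \<int>\<^sub>\<le>\<^sub>0" and "\<mu> + 1 \<notin> \<int>\<^sub>\<le>\<^sub>0"
  shows "(\<Sum>L\<le>N div 2. product_term \<mu> k (L, N - 2 * L))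
       = hyperF_term [\<mu>/2 + 1/4, \<mu>/2 + 3/4] [1, \<mu> + 1/2, \<mu> + 1] (- (k ^ 2)) N"
proof -
  have "(\<Sum>p\<le>N. pochhammer_ratio \<mu> (N - p) *
          (\<Sum>L\<le>min p (N - p). neumann_factor L
             / (fact (p - L) * fact (p + L) * fact (N - p - L) * fact (N - p + L))))
      = (\<Sum>p\<le>N. pochhammer_ratio \<mu> (N - p)
                   * (fact (2 * N) / (fact (2 * p) * fact (2 * (N - p)) * fact N ^ 2)))"
  proof (intro sum.cong refl arg_cong2[where f = times])
    fix p assume "p \<in> {..N}"
    then show "(\<Sum>L\<le>min p (N - p). neumann_factor L
             / (fact (p - L) * fact (p + L) * fact (N - p - L) * fact (N - p + L)))
        = (fact (2 * N) / (fact (2 * p) * fact (2 * (N - p)) * fact N ^ 2) :: complex)"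
      using sum_neumann_factor_inverse_factorials[of p "N - p"] by simp
  qed
  also have "\<dots> = (\<Sum>q\<le>N. pochhammer_ratio \<mu> q
                              * (fact (2 * N) / (fact (2 * q) * fact (2 * N - 2 * q) * fact N ^ 2)))"
    by (rule sum.reindex_bij_witness[of _ "\<lambda>q. N - q" "\<lambda>p. N - p"])
       (auto simp: mult.commute[of "fact (2 * (N - _))"] simp flip: diff_mult_distrib2)
  also have "\<dots> = (\<Sum>q\<le>N. of_nat ((2 * N) choose (2 * q)) * pochhammer (1/2) q / pochhammer (\<mu> + 1) q)
                    / fact N ^ 2"
    unfolding sum_divide_distrib
    by (intro sum.cong refl) (simp add: binomial_fact pochhammer_ratio_def mult_ac)
  also have "\<dots> = pochhammer (\<mu> + 1 + of_nat N - 1/2) N / pochhammer (\<mu> + 1) N / fact N ^ 2"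
    using assms(2) pochhammer_eq_0_imp_nonpos_Int
    by (subst sum_choose_double_even_pochhammer_half) blast+
  finally show ?thesis
    unfolding sum_diagonal_product_term_regrouped hyperF_term_2F3[OF assms(1)] by simp
qed

lemma geometric_bound_of_eventual_ratio_bound:
  fixes f :: "nat \<Rightarrow> 'a::real_normed_vector"
  assumes "c > 0" and ratio: "\<And>n. n \<ge> N \<Longrightarrow> norm (f (Suc n)) \<le> c * norm (f n)"
  shows "\<exists>D. \<forall>n. norm (f n) \<le> D * c ^ n"
proof -
  define D where "D = (\<Sum>i\<le>N. norm (f i) / c ^ i)"
  have tail: "norm (f (N + j)) \<le> norm (f N) * c ^ j" for j
  proof (induction j)
    case (Suc j)
    have "norm (f (N + Suc j)) \<le> c * norm (f (N + j))"
      using ratio[of "N + j"] by simp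
    also have "\<dots> \<le> c * (norm (f N) * c ^ j)"
      using Suc.IH \<open>c > 0\<close> by simp
    finally show ?case by (simp add: mult_ac)
  qed simp
  have "norm (f n) \<le> D * c ^ n" for n
  proof (cases "n \<le> N")
    case True
    then have "norm (f n) / c ^ n \<le> D"
      unfolding D_def using \<open>c > 0\<close> by (intro member_le_sum) auto
    then show ?thesis using \<open>c > 0\<close> by (simp add: field_simps)
  next
    case False
    then obtain j where n: "n = N + j" by (metis le_add_diff_inverse nle_le)
    have "norm (f N) / c ^ N \<le> D"
      unfolding D_def using \<open>c > 0\<close> by (intro member_le_sum) auto
    then have "norm (f N) * c ^ j \<le> D * c ^ n"
      using \<open>c > 0\<close> by (simp add: n power_add field_simps)
    then show ?thesis using tail[of j] n by simp
  qed
  then show ?thesis by blast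
qed

lemma summable_scaled_exp_series: "summable (\<lambda>n. A * x ^ n / fact n :: real)"
  using summable_mult[OF summable_exp[of x], of A] by (simp add: field_simps)

lemma summable_norm_of_exp_bound:
  fixes a :: "nat \<Rightarrow> 'a::real_normed_vector"
  assumes "\<And>i. norm (a i) \<le> A * x ^ i / fact i"
  shows "summable (\<lambda>i. norm (a i))"
  by (rule summable_comparison_test[OF _ summable_scaled_exp_series[of A x]]) (use assms in simp)

lemma exp_series_convolution:
  "(\<Sum>i\<le>n. x ^ i / fact i * (y ^ (n - i) / fact (n - i))) = ((x::real) + y) ^ n / fact n"
  using exp_series_add_commuting[of x y n] by (simp add: divide_inverse_commute)

lemma norm_cauchy_product_le_exp_bound:
  fixes a b :: "nat \<Rightarrow> 'a::real_normed_algebra"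
  assumes a: "\<And>i. norm (a i) \<le> A * x ^ i / fact i" and b: "\<And>i. norm (b i) \<le> B * y ^ i / fact i"
    and "x \<ge> 0" "y \<ge> 0"
  shows "norm (\<Sum>i\<le>n. a i * b (n - i)) \<le> A * B * (x + y) ^ n / fact n"
proof -
  have "norm (\<Sum>i\<le>n. a i * b (n - i)) \<le> (\<Sum>i\<le>n. norm (a i) * norm (b (n - i)))"
    by (rule order_trans[OF norm_sum sum_mono[OF norm_mult_ineq]])
  also have "\<dots> \<le> (\<Sum>i\<le>n. (A * x ^ i / fact i) * (B * y ^ (n - i) / fact (n - i)))"
    by (intro sum_mono mult_mono' a b norm_ge_zero)
  also have "\<dots> = A * B * (\<Sum>i\<le>n. x ^ i / fact i * (y ^ (n - i) / fact (n - i)))"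
    by (simp add: sum_distrib_left mult_ac)
  also have "\<dots> = A * B * (x + y) ^ n / fact n"
    unfolding exp_series_convolution by simp
  finally show ?thesis .
qed

lemma summable_on_of_norm_le_mult:
  fixes f :: "nat \<times> nat \<Rightarrow> 'a::banach"
  assumes bound: "\<And>m n. norm (f (m, n)) \<le> u m * v n"
    and u_summable: "summable u" and v_summable: "summable v"
    and u: "\<And>m. u m \<ge> 0" and v: "\<And>n. v n \<ge> 0"
  shows "f summable_on UNIV"
proof -
  have "(\<lambda>(m, n). u m * v n) summable_on Sigma UNIV (\<lambda>_. UNIV)"
  proof (rule summable_on_SigmaI[where g = "\<lambda>m. u m * suminf v"])
    fix m
    have "(v has_sum suminf v) UNIV"
      using v_summable v by (intro sums_nonneg_imp_has_sum) (auto simp: summable_sums)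
    then show "((\<lambda>n. case (m, n) of (m, n) \<Rightarrow> u m * v n) has_sum u m * suminf v) UNIV"
      by (simp add: has_sum_cmult_right)
  next
    show "(\<lambda>m. u m * suminf v) summable_on UNIV"
      using u_summable v_summable u v
      by (intro summable_nonneg_imp_summable_on summable_mult2 mult_nonneg_nonneg suminf_nonneg) auto
  qed (simp add: u v)
  then have "(\<lambda>(m, n). u m * v n) summable_on UNIV"
    by simp
  then have "(\<lambda>x. norm (f x)) summable_on UNIV"
    by (rule Infinite_Sum.abs_summable_on_comparison_test') (auto simp: bound)
  then show ?thesis
    by (rule abs_summable_summable)
qed

lemma has_sum_diagonals:
  fixes f :: "nat \<times> nat \<Rightarrow> 'a::{comm_monoid_add, uniform_space, uniform_topological_group_add}"
  assumes "(f has_sum S) UNIV"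
  shows "((\<lambda>N. \<Sum>L\<le>N div 2. f (L, N - 2 * L)) has_sum S) UNIV"
proof -
  have "(f has_sum S) UNIV
      \<longleftrightarrow> ((\<lambda>(N, L). f (L, N - 2 * L)) has_sum S) (Sigma UNIV (\<lambda>N. {..N div 2}))"
    by (rule has_sum_reindex_bij_witness[where i = "\<lambda>(N, L). (L, N - 2 * L)"
          and j = "\<lambda>(L, n). (2 * L + n, L)"]) auto
  with assms have "((\<lambda>(N, L). f (L, N - 2 * L)) has_sum S) (Sigma UNIV (\<lambda>N. {..N div 2}))"
    by blast
  then show ?thesis
    by (rule has_sum_Sigma') auto
qed

lemma mult_suminf_eq_of_termwise:
  fixes c d :: "'a::{real_normed_field, banach}"
  assumes termwise: "\<And>m. c * f m = d * g m" and "summable g"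
  shows "c * suminf f = d * suminf g"
proof (cases "c = 0")
  case True
  then have "(\<lambda>m. d * g m) = (\<lambda>_. 0)"
    using termwise by (metis mult_zero_left)
  then show ?thesis
    using suminf_mult[OF \<open>summable g\<close>, of d] True by simp
next
  case False
  have "f = (\<lambda>m. d / c * g m)"
  proof
    fix m
    have "f m = c * f m / c"
      using False by simp
    also have "\<dots> = d / c * g m"
      by (simp add: termwise)
    finally show "f m = d / c * g m" .
  qed
  then show ?thesis
    using suminf_mult[OF \<open>summable g\<close>, of "d / c"] False by simp
qed

lemma norm_pochhammer_ratio_le: "\<exists>D. \<forall>q. norm (pochhammer_ratio \<mu> q) \<le> D * 2 ^ q"
proof (rule geometric_bound_of_eventual_ratio_bound)
  fix q :: nat assume "nat \<lceil>2 * norm \<mu>\<rceil> \<le> q"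
  then have large: "2 * norm \<mu> \<le> real q" by linarith
  have "norm (of_nat (Suc q) :: complex) \<le> norm (\<mu> + 1 + of_nat q) + norm \<mu>"
    using norm_triangle_ineq4[of "\<mu> + 1 + of_nat q" \<mu>] by (simp add: algebra_simps)
  then have "real q + 1 - norm \<mu> \<le> norm (\<mu> + 1 + of_nat q)"
    unfolding norm_of_nat by simp
  moreover have "(1/2 + of_nat q :: complex) = of_real (real q + 1/2)"
    by simp
  then have "norm (1/2 + of_nat q :: complex) = real q + 1/2"
    by (simp only: norm_of_real)
  ultimately have step: "norm ((1/2 + of_nat q) / (\<mu> + 1 + of_nat q)) \<le> 2"
    using large by (simp add: norm_divide divide_le_eq)
  have "pochhammer_ratio \<mu> (Suc q) = pochhammer_ratio \<mu> q * ((1/2 + of_nat q) / (\<mu> + 1 + of_nat q))"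
    by (simp add: pochhammer_ratio_def pochhammer_Suc)
  then have "norm (pochhammer_ratio \<mu> (Suc q))
      = norm (pochhammer_ratio \<mu> q) * norm ((1/2 + of_nat q) / (\<mu> + 1 + of_nat q))"
    by (simp only: norm_mult)
  also have "\<dots> \<le> norm (pochhammer_ratio \<mu> q) * 2"
    using step by (rule mult_left_mono) simp
  finally show "norm (pochhammer_ratio \<mu> (Suc q)) \<le> 2 * norm (pochhammer_ratio \<mu> q)"
    by (simp only: mult.commute)
qed simp

lemma norm_besselJ_term_le:
  "norm (besselJ_term (2 * L) k i) \<le> ((norm k / 2) ^ 2) ^ L / fact L * ((norm k / 2) ^ 2) ^ i / fact i"
proof -
  have "norm (besselJ_term (2 * L) k i) = (norm k / 2) ^ (2 * i + 2 * L) / (fact i * fact (i + 2 * L))"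
    by (simp add: besselJ_term_def norm_divide norm_mult norm_power)
  also have "\<dots> \<le> (norm k / 2) ^ (2 * i + 2 * L) / (fact i * fact L)"
    by (intro divide_left_mono mult_left_mono fact_mono) auto
  also have "\<dots> = ((norm k / 2) ^ 2) ^ L / fact L * ((norm k / 2) ^ 2) ^ i / fact i"
    by (simp add: power_add mult_ac flip: power_mult)
  finally show ?thesis .
qed

lemma norm_scaled_F12_term_le:
  assumes "\<And>q. norm (pochhammer_ratio \<mu> q) \<le> D * 2 ^ q"
  shows "norm (scaled_F12_term \<mu> k L m)
       \<le> D * (2 * (norm k / 2) ^ 2) ^ L * (2 * (norm k / 2) ^ 2) ^ m / fact m"
proof -
  have "norm (scaled_F12_term \<mu> k L m)
      = (norm k / 2) ^ (2 * m + 2 * L) * norm (pochhammer_ratio \<mu> (L + m)) / (fact m * fact (m + 2 * L))"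
    by (simp add: scaled_F12_term_def norm_mult norm_divide norm_power)
  also have "\<dots> \<le> (norm k / 2) ^ (2 * m + 2 * L) * (D * 2 ^ (L + m)) / (fact m * fact (m + 2 * L))"
    by (intro divide_right_mono mult_left_mono assms) auto
  also have "\<dots> \<le> (norm k / 2) ^ (2 * m + 2 * L) * (D * 2 ^ (L + m)) / fact m"
    using order_trans[OF norm_ge_zero assms[of 0]] by (intro divide_left_mono) auto
  also have "\<dots> = D * (2 * (norm k / 2) ^ 2) ^ L * (2 * (norm k / 2) ^ 2) ^ m / fact m"
    by (simp add: power_add power_mult_distrib mult_ac flip: power_mult)
  finally show ?thesis .
qed

lemma norm_product_term_le:
  assumes "\<And>q. norm (pochhammer_ratio \<mu> q) \<le> D * 2 ^ q"
  shows "norm (product_term \<mu> k (L, n))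
       \<le> 2 * D * (2 * ((norm k / 2) ^ 2) ^ 2) ^ L / fact L * ((3 * (norm k / 2) ^ 2) ^ n / fact n)"
proof -
  have "norm (\<Sum>i\<le>n. besselJ_term (2 * L) k i * scaled_F12_term \<mu> k L (n - i))
      \<le> ((norm k / 2) ^ 2) ^ L / fact L * (D * (2 * (norm k / 2) ^ 2) ^ L)
         * ((norm k / 2) ^ 2 + 2 * (norm k / 2) ^ 2) ^ n / fact n"
    by (intro norm_cauchy_product_le_exp_bound norm_besselJ_term_le norm_scaled_F12_term_le assms)
       auto
  also have "\<dots> = D * (2 * ((norm k / 2) ^ 2) ^ 2) ^ L / fact L * ((3 * (norm k / 2) ^ 2) ^ n / fact n)"
  proof -
    define x where "x = (norm k / 2) ^ 2"
    have "x + 2 * x = 3 * x"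
      by simp
    then show ?thesis
      unfolding x_def[symmetric] by (simp add: power_mult_distrib power2_eq_square mult_ac)
  qed
  finally have sum_le: "norm (\<Sum>i\<le>n. besselJ_term (2 * L) k i * scaled_F12_term \<mu> k L (n - i))
      \<le> D * (2 * ((norm k / 2) ^ 2) ^ 2) ^ L / fact L * ((3 * (norm k / 2) ^ 2) ^ n / fact n)" .
  have "norm (product_term \<mu> k (L, n))
      = norm (neumann_factor L :: complex)
        * norm (\<Sum>i\<le>n. besselJ_term (2 * L) k i * scaled_F12_term \<mu> k L (n - i))"
    by (simp add: product_term_def norm_mult)
  also have "\<dots> \<le> 2 * (D * (2 * ((norm k / 2) ^ 2) ^ 2) ^ L / fact L * ((3 * (norm k / 2) ^ 2) ^ n / fact n))"
    using sum_le by (intro mult_mono) (auto simp: neumann_factor_def)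
  finally show ?thesis
    by simp
qed

lemma summable_scaled_F12_term: "summable (scaled_F12_term \<mu> k L)"
proof -
  obtain D where "\<And>q. norm (pochhammer_ratio \<mu> q) \<le> D * 2 ^ q"
    using norm_pochhammer_ratio_le by blast
  then show ?thesis
    by (rule summable_norm_cancel[OF summable_norm_of_exp_bound[OF norm_scaled_F12_term_le]])
qed

lemma product_term_row_has_sum:
  assumes "\<And>q. norm (pochhammer_ratio \<mu> q) \<le> D * 2 ^ q"
  shows "((\<lambda>n. product_term \<mu> k (L, n))
           has_sum neumann_factor L * (besselJ (2 * L) k * (\<Sum>m. scaled_F12_term \<mu> k L m))) UNIV"
proof (rule norm_summable_imp_has_sum)
  show "summable (\<lambda>n. norm (product_term \<mu> k (L, n)))"
    using norm_product_term_le[OF assms, of k L]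
    by (intro summable_norm_of_exp_bound[where A = "2 * D * (2 * ((norm k / 2) ^ 2) ^ 2) ^ L / fact L"
          and x = "3 * (norm k / 2) ^ 2"]) (simp only: times_divide_eq_right)
  have "(\<lambda>n. \<Sum>i\<le>n. besselJ_term (2 * L) k i * scaled_F12_term \<mu> k L (n - i))
      sums (besselJ (2 * L) k * (\<Sum>m. scaled_F12_term \<mu> k L m))"
    unfolding besselJ_eq_suminf
    by (intro Cauchy_product_sums summable_norm_of_exp_bound[OF norm_besselJ_term_le]
        summable_norm_of_exp_bound[OF norm_scaled_F12_term_le[OF assms]])
  then show "(\<lambda>n. product_term \<mu> k (L, n))
      sums (neumann_factor L * (besselJ (2 * L) k * (\<Sum>m. scaled_F12_term \<mu> k L m)))"
    unfolding product_term_def prod.case by (rule sums_mult)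
qed

lemma neumann_series_sums_2F3:
  assumes "\<mu> + 1/2 \<notin> \<int>\<^sub>\<le>\<^sub>0" and "\<mu> + 1 \<notin> \<int>\<^sub>\<le>\<^sub>0"
  shows "(\<lambda>L. neumann_factor L * (besselJ (2 * L) k * (\<Sum>m. scaled_F12_term \<mu> k L m)))
           sums hyperF [\<mu>/2 + 1/4, \<mu>/2 + 3/4] [1, \<mu> + 1/2, \<mu> + 1] (- (k ^ 2))"
proof -
  obtain D where D: "\<And>q. norm (pochhammer_ratio \<mu> q) \<le> D * 2 ^ q"
    using norm_pochhammer_ratio_le by blast
  then have "D \<ge> 0"
    using order_trans[OF norm_ge_zero D[of 0]] by simp
  have "product_term \<mu> k summable_on UNIV"
  proof (rule summable_on_of_norm_le_mult)
    show "norm (product_term \<mu> k (L, n))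
        \<le> 2 * D * (2 * ((norm k / 2) ^ 2) ^ 2) ^ L / fact L * ((3 * (norm k / 2) ^ 2) ^ n / fact n)" for L n
      by (rule norm_product_term_le[OF D])
    show "summable (\<lambda>L. 2 * D * (2 * ((norm k / 2) ^ 2) ^ 2) ^ L / fact L)"
      by (rule summable_scaled_exp_series)
    show "summable (\<lambda>n. (3 * (norm k / 2) ^ 2) ^ n / fact n)"
      using summable_scaled_exp_series[of 1 "3 * (norm k / 2) ^ 2"] by simp
  qed (use \<open>D \<ge> 0\<close> in auto)
  then obtain S where S: "(product_term \<mu> k has_sum S) UNIV"
    by (auto simp: summable_on_def)
  have "((\<lambda>L. neumann_factor L * (besselJ (2 * L) k * (\<Sum>m. scaled_F12_term \<mu> k L m)))
          has_sum S) UNIV"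
    using has_sum_Sigma'[where f = "product_term \<mu> k" and A = UNIV and B = "\<lambda>_. UNIV"]
      S product_term_row_has_sum[OF D]
    by auto
  moreover have
    "((\<lambda>N. hyperF_term [\<mu>/2 + 1/4, \<mu>/2 + 3/4] [1, \<mu> + 1/2, \<mu> + 1] (- (k ^ 2)) N) has_sum S) UNIV"
    using has_sum_diagonals[OF S] by (simp add: sum_diagonal_product_term[OF assms])
  then have "hyperF [\<mu>/2 + 1/4, \<mu>/2 + 3/4] [1, \<mu> + 1/2, \<mu> + 1] (- (k ^ 2)) = S"
    unfolding hyperF_eq_suminf by (rule sums_unique[symmetric, OF has_sum_imp_sums])
  ultimately show ?thesis
    by (simp add: has_sum_imp_sums)
qed

lemma neumann_coefficient_eq:
  assumes "\<mu> + 1 \<notin> \<int>\<^sub>\<le>\<^sub>0"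
  shows "complex_of_real (sqrt pi) * Gamma (\<mu> + 1) *
            ((-1) ^ (2 * L) * 2 powi (- (6 * int L)) * k ^ (2 * L) * Gamma (of_nat (2 * L) + 1)
               * (2 - (if L = 0 then 1 else 0))
             / ((fact L) ^ 2 * Gamma (of_nat L + 1/2) * Gamma (of_nat L + \<mu> + 1)))
       = neumann_factor L * (k ^ (2 * L) / (16 ^ L * fact L * pochhammer (\<mu> + 1) L))"
proof -
  have "Gamma (of_nat (2 * L) + 1 :: complex) = 4 ^ L * pochhammer (1/2) L * fact L"
    using Gamma_fact[of "2 * L", where 'a = complex] fact_double[of L, where 'a = complex]
    by (simp add: power_mult add.commute)
  moreover have "Gamma (of_nat L + 1/2 :: complex) = pochhammer (1/2) L * complex_of_real (sqrt pi)"
    using pochhammer_Gamma[OF one_half_notin_nonpos_Ints, of L, where 'a = complex] Gamma_one_half_complex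
    by (simp add: field_simps)
  moreover have "Gamma (\<mu> + 1) \<noteq> 0"
    using assms by (simp add: Gamma_eq_zero_iff)
  moreover from this have "Gamma (of_nat L + \<mu> + 1) = pochhammer (\<mu> + 1) L * Gamma (\<mu> + 1)"
    using pochhammer_Gamma[OF assms, of L] by (simp add: field_simps)
  moreover have "(2 :: complex) powi (- (6 * int L)) = 1 / (16 ^ L * 4 ^ L)"
  proof -
    have "(2 :: complex) powi (- (6 * int L)) = inverse (2 ^ (6 * L))"
      by (simp add: power_int_minus flip: power_int_of_nat)
    also have "(2 :: complex) ^ (6 * L) = 16 ^ L * 4 ^ L"
      by (simp add: power_mult flip: power_mult_distrib)
    finally show ?thesis
      by (simp add: divide_inverse)
  qed
  moreover have "pochhammer (\<mu> + 1) L \<noteq> 0"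
    using assms pochhammer_eq_0_imp_nonpos_Int by blast
  ultimately show ?thesis
    using pochhammer_half_nonzero[of L, where 'a = complex]
    by (simp add: neumann_factor_def field_simps power2_eq_square)
qed

lemma coefficient_mult_F12_term:
  assumes "\<mu> + 1 \<notin> \<int>\<^sub>\<le>\<^sub>0"
  shows "k ^ (2 * L) / (16 ^ L * fact L * pochhammer (\<mu> + 1) L)
           * hyperF_term [of_nat L + 1/2] [of_nat (2 * L) + 1, of_nat L + \<mu> + 1] (- (k ^ 2 / 4)) m
       = scaled_F12_term \<mu> k L m"
proof -
  have "pochhammer (1 :: complex) (2 * L + m) = pochhammer 1 (2 * L) * pochhammer (of_nat (2 * L) + 1) m"
    using pochhammer_product'[of "1 :: complex" "2 * L" m] by (simp add: add.commute)
  then have shift_double: "pochhammer (of_nat (2 * L) + 1 :: complex) m = fact (m + 2 * L) / fact (2 * L)"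
    by (simp add: pochhammer_fact[symmetric] field_simps)
  have shift_half: "pochhammer (of_nat L + 1/2 :: complex) m = pochhammer (1/2) (L + m) / pochhammer (1/2) L"
    using pochhammer_product'[of "1/2 :: complex" L m] pochhammer_half_nonzero[of L, where 'a = complex]
    by (simp add: field_simps)
  have nonzero: "pochhammer (\<mu> + 1) n \<noteq> 0" for n
    using assms pochhammer_eq_0_imp_nonpos_Int by blast
  then have shift_mu: "pochhammer (of_nat L + \<mu> + 1) m = pochhammer (\<mu> + 1) (L + m) / pochhammer (\<mu> + 1) L"
    using pochhammer_product'[of "\<mu> + 1" L m] by (simp add: field_simps)
  have double: "fact (2 * L) = (4 :: complex) ^ L * pochhammer (1/2) L * fact L"
    using fact_double[of L, where 'a = complex] by (simp add: power_mult)
  have sign: "(- (k ^ 2 / 4)) ^ m = (-1) ^ m * (k / 2) ^ (2 * m)"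
    by (simp add: power_minus[of "k ^ 2 / 4"] power_mult power_divide)
  have halve: "k ^ (2 * L) = 4 ^ L * (k / 2) ^ (2 * L)"
    by (simp add: power_divide power_mult)
  have sixteen: "(16 :: complex) ^ L = 4 ^ L * 4 ^ L"
    by (simp flip: power_mult_distrib)
  show ?thesis
    unfolding hyperF_term_def scaled_F12_term_def pochhammer_ratio_def list.map prod_list.Cons
      prod_list.Nil mult_1_right shift_double shift_half shift_mu sign halve sixteen double
    using nonzero pochhammer_half_nonzero[of L, where 'a = complex]
      pochhammer_half_nonzero[of "L + m", where 'a = complex]
    by (simp add: field_simps power_add)
qed

lemma neumann_summand_eq:
  assumes "\<mu> + 1 \<notin> \<int>\<^sub>\<le>\<^sub>0"
  shows "complex_of_real (sqrt pi) * Gamma (\<mu> + 1) *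
            ((-1) ^ (2 * L) * 2 powi (- (6 * int L)) * k ^ (2 * L) * Gamma (of_nat (2 * L) + 1)
               * (2 - (if L = 0 then 1 else 0))
             / ((fact L) ^ 2 * Gamma (of_nat L + 1/2) * Gamma (of_nat L + \<mu> + 1)))
            * besselJ (2 * L) k
            * hyperF [of_nat L + 1/2] [of_nat (2 * L) + 1, of_nat L + \<mu> + 1] (- (k ^ 2 / 4))
       = neumann_factor L * (besselJ (2 * L) k * (\<Sum>m. scaled_F12_term \<mu> k L m))"
proof -
  define c where "c = k ^ (2 * L) / (16 ^ L * fact L * pochhammer (\<mu> + 1) L)"
  have "c * hyperF [of_nat L + 1/2] [of_nat (2 * L) + 1, of_nat L + \<mu> + 1] (- (k ^ 2 / 4))
      = 1 * (\<Sum>m. scaled_F12_term \<mu> k L m)"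
    unfolding hyperF_eq_suminf c_def
    by (intro mult_suminf_eq_of_termwise summable_scaled_F12_term)
       (simp only: mult_1_left coefficient_mult_F12_term[OF assms])
  then show ?thesis
    unfolding neumann_coefficient_eq[OF assms] c_def[symmetric] by (simp add: mult_ac)
qed

theorem mainTheorem3:
  fixes k \<mu> :: complex
  assumes "\<mu> + 1/2 \<notin> \<int>\<^sub>\<le>\<^sub>0" and "\<mu> + 1 \<notin> \<int>\<^sub>\<le>\<^sub>0"
  shows "(\<lambda>L::nat. complex_of_real (sqrt pi) * Gamma (\<mu> + 1) *
            ((-1) ^ (2 * L) * 2 powi (- (6 * int L)) * k ^ (2 * L) * Gamma (of_nat (2 * L) + 1)
               * (2 - (if L = 0 then 1 else 0))
             / ((fact L) ^ 2 * Gamma (of_nat L + 1/2) * Gamma (of_nat L + \<mu> + 1)))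
            * besselJ (2 * L) k
            * hyperF [of_nat L + 1/2] [of_nat (2 * L) + 1, of_nat L + \<mu> + 1] (- (k ^ 2 / 4)))
         sums hyperF [\<mu>/2 + 1/4, \<mu>/2 + 3/4] [1, \<mu> + 1/2, \<mu> + 1] (- (k ^ 2))"
  unfolding neumann_summand_eq[OF assms(2)] by (rule neumann_series_sums_2F3[OF assms])

end
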